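(* Let $G\in\mathcal{V}_{\sigma\ell\mathbb{G}}$, $(f_n)_{n\ge1}\subseteq G$ and $g\in G$. Then $g=\sup_{n\ge1}f_n$ if and only if $g=\bigvee_{n\ge1}^g f_n$ and $f_n\wedge g=f_n$ for every $n\ge1$.
   Context: $\mathcal{V}_{\sigma\ell\mathbb{G}}$ is the infinitary variety of algebras $(G,0,+,-,\vee,\wedge,\bigvee^-)$, $\bigvee^-$ of countably infinite arity with $\bigvee_{n\ge1}^g f_n:=\bigvee^-(g,f_1,f_2,\dots)$, satisfying the $\ell$-group axioms and (A1) $\bigvee_{n\ge1}^g f_n=\bigvee_{n\ge1}^g(f_n\wedge g)$; (A2) $\bigvee_{n\ge1}^g f_n=(f_1\wedge g)\vee\bigvee^-(g,f_2,f_3,\dots)$; (A3) $\bigvee_{n\ge1}^g(f_n\wedge h)\le h$ ($a\le b$ meaning $a\wedge b=a$). The supremum refers to the lattice order of $G$. *)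

theory Defs
  imports Main "HOL-Library.Lattice_Algebras"
begin

text \<open>An algebra in the infinitary variety: an abelian l-group (type class
  lattice_ab_group_add) together with a countably infinitary operation
  V g s, where V g s stands for the paper's operation applied to g, f_1, f_2, ...
  with the sequence s encoded 0-based, i.e. s k = f_(k+1).\<close>

definition sigma_lgroup_op :: "('a::lattice_ab_group_add \<Rightarrow> (nat \<Rightarrow> 'a) \<Rightarrow> 'a) \<Rightarrow> bool" where
  "sigma_lgroup_op V \<longleftrightarrow>
     (\<forall>g s. V g s = V g (\<lambda>k. inf (s k) g)) \<and>
     (\<forall>g s. V g s = sup (inf (s 0) g) (V g (\<lambda>k. s (Suc k)))) \<and>
     (\<forall>g s h. V g (\<lambda>k. inf (s k) h) \<le> h)"

definition is_sup_seq :: "'a::order \<Rightarrow> (nat \<Rightarrow> 'a) \<Rightarrow> bool" where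
  "is_sup_seq g f \<longleftrightarrow> (\<forall>n\<ge>1. f n \<le> g) \<and> (\<forall>u. (\<forall>n\<ge>1. f n \<le> u) \<longrightarrow> g \<le> u)"

end

theory Submission
  imports Defs
begin

text \<open>By (A2) the operation dominates each truncated term \<open>f\<^sub>n \<sqinter> g\<close>, and by (A1)
  and (A3) it lies below every upper bound of the \<open>f\<^sub>n\<close>. Hence, when all \<open>f\<^sub>n \<le> g\<close>,
  the operation at \<open>g\<close> computes the supremum, and the equivalence follows by
  uniqueness of suprema.\<close>

lemma sigma_lgroup_op_inf_le:
  assumes "sigma_lgroup_op V"
  shows "inf (s k) g \<le> V g s"
proof (induction k arbitrary: s)
  case 0
  show ?case using assms unfolding sigma_lgroup_op_def by (metis sup.cobounded1)
next
  case (Suc k)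
  have "inf (s (Suc k)) g \<le> V g (\<lambda>k. s (Suc k))" using Suc.IH .
  also have "\<dots> \<le> V g s" using assms unfolding sigma_lgroup_op_def by (metis sup.cobounded2)
  finally show ?case .
qed

lemma sigma_lgroup_op_le_upper_bound:
  assumes "sigma_lgroup_op V" and "\<And>k. s k \<le> u"
  shows "V g s \<le> u"
proof -
  have "V g s = V g (\<lambda>k. inf (s k) u)" using assms(2) by (simp add: inf_absorb1)
  then show ?thesis using assms(1) unfolding sigma_lgroup_op_def by metis
qed

lemma sigma_lgroup_op_is_sup_seq:
  assumes "sigma_lgroup_op V" and "\<forall>n\<ge>1. f n \<le> g"
  shows "is_sup_seq (V g (\<lambda>k. f (Suc k))) f"
  unfolding is_sup_seq_def
proof (intro conjI allI impI)
  fix n :: nat assume "n \<ge> 1"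
  then obtain k where "n = Suc k" using not0_implies_Suc by fastforce
  then show "f n \<le> V g (\<lambda>k. f (Suc k))"
    using sigma_lgroup_op_inf_le[OF assms(1), of "\<lambda>k. f (Suc k)" k g] assms(2)
    by (simp add: inf_absorb1)
next
  fix u assume "\<forall>n\<ge>1. f n \<le> u"
  then show "V g (\<lambda>k. f (Suc k)) \<le> u"
    by (intro sigma_lgroup_op_le_upper_bound[OF assms(1)]) simp
qed

lemma is_sup_seq_unique:
  assumes "is_sup_seq a f" and "is_sup_seq b f"
  shows "a = b"
  using assms unfolding is_sup_seq_def by (blast intro: order.antisym)

theorem mainTheorem19:
  fixes V :: "'a::lattice_ab_group_add \<Rightarrow> (nat \<Rightarrow> 'a) \<Rightarrow> 'a"
    and f :: "nat \<Rightarrow> 'a" and g :: 'a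
  assumes "sigma_lgroup_op V"
  shows "is_sup_seq g f \<longleftrightarrow>
           (g = V g (\<lambda>k. f (Suc k)) \<and> (\<forall>n\<ge>1. inf (f n) g = f n))"
proof
  assume sup: "is_sup_seq g f"
  then have bounded: "\<forall>n\<ge>1. f n \<le> g" unfolding is_sup_seq_def by simp
  have "g = V g (\<lambda>k. f (Suc k))"
    using is_sup_seq_unique[OF sup sigma_lgroup_op_is_sup_seq[OF assms bounded]] .
  with bounded show "g = V g (\<lambda>k. f (Suc k)) \<and> (\<forall>n\<ge>1. inf (f n) g = f n)"
    by (simp add: inf_absorb1)
next
  assume "g = V g (\<lambda>k. f (Suc k)) \<and> (\<forall>n\<ge>1. inf (f n) g = f n)"
  then have g_eq: "g = V g (\<lambda>k. f (Suc k))" and bounded: "\<forall>n\<ge>1. f n \<le> g"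
    by (simp_all add: inf.absorb_iff1)
  show "is_sup_seq g f"
    using sigma_lgroup_op_is_sup_seq[OF assms bounded] by (simp flip: g_eq)
qed

end
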